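(* Let $(M,d)$ be a metric space having an accumulation point, and let $0<c<1$. Then there exists a distance $\overline d$ on $M$ with $c\,d\leq\overline d\leq d$ such that the Weak Besicovitch Covering Property (and hence BCP) does not hold for $\overline d$.
   Context: Balls are closed, $B_d(p,r)=\{q:d(q,p)\le r\}$, with fixed center and radius. A family of Besicovitch balls is a finite family $\{B_d(x_B,r_B)\}$ of balls such that $x_B\notin B'$ for all distinct $B,B'$ in the family and the intersection of all its balls is nonempty. w-BCP holds for $d$ if there is an integer $N\ge1$ such that every family of Besicovitch balls has cardinality at most $N$. BCP holds for $d$ if there is $N\geq1$ such that for every bounded $A\subset M$ and every family $\mathcal B$ of balls such that each point of $A$ is the center of some ball of $\mathcal B$, there is a subfamily $\mathcal F\subset\mathcal B$ with $\chi_A\leq\sum_{B\in\mathcal F}\chi_B\leq N$. *)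

theory Defs
  imports "HOL-Analysis.Analysis"
begin

definition metric_on :: "'a set \<Rightarrow> ('a \<Rightarrow> 'a \<Rightarrow> real) \<Rightarrow> bool" where
  "metric_on M d \<longleftrightarrow>
     (\<forall>x\<in>M. \<forall>y\<in>M. 0 \<le> d x y) \<and>
     (\<forall>x\<in>M. \<forall>y\<in>M. d x y = 0 \<longleftrightarrow> x = y) \<and>
     (\<forall>x\<in>M. \<forall>y\<in>M. d x y = d y x) \<and>
     (\<forall>x\<in>M. \<forall>y\<in>M. \<forall>z\<in>M. d x z \<le> d x y + d y z)"

definition accumulation_point :: "'a set \<Rightarrow> ('a \<Rightarrow> 'a \<Rightarrow> real) \<Rightarrow> 'a \<Rightarrow> bool" where
  "accumulation_point M d p \<longleftrightarrow>
     p \<in> M \<and> (\<forall>e>0. \<exists>q\<in>M. q \<noteq> p \<and> d q p < e)"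

text \<open>A ball is given by its centre and radius (a pair); its point set is the closed ball.\<close>
definition is_ball :: "'a set \<Rightarrow> ('a \<times> real) \<Rightarrow> bool" where
  "is_ball M B \<longleftrightarrow> fst B \<in> M \<and> 0 < snd B"

definition cball_d :: "'a set \<Rightarrow> ('a \<Rightarrow> 'a \<Rightarrow> real) \<Rightarrow> ('a \<times> real) \<Rightarrow> 'a set" where
  "cball_d M d B = {q \<in> M. d q (fst B) \<le> snd B}"

definition besicovitch_family :: "'a set \<Rightarrow> ('a \<Rightarrow> 'a \<Rightarrow> real) \<Rightarrow> ('a \<times> real) set \<Rightarrow> bool" where
  "besicovitch_family M d F \<longleftrightarrow>
     finite F \<and> (\<forall>B\<in>F. is_ball M B) \<and>
     (\<forall>B\<in>F. \<forall>B'\<in>F. B \<noteq> B' \<longrightarrow> fst B \<notin> cball_d M d B') \<and>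
     (\<exists>p\<in>M. \<forall>B\<in>F. p \<in> cball_d M d B)"

definition wBCP :: "'a set \<Rightarrow> ('a \<Rightarrow> 'a \<Rightarrow> real) \<Rightarrow> bool" where
  "wBCP M d \<longleftrightarrow> (\<exists>N::nat. 1 \<le> N \<and> (\<forall>F. besicovitch_family M d F \<longrightarrow> card F \<le> N))"

definition bounded_d :: "'a set \<Rightarrow> ('a \<Rightarrow> 'a \<Rightarrow> real) \<Rightarrow> 'a set \<Rightarrow> bool" where
  "bounded_d M d A \<longleftrightarrow> A \<subseteq> M \<and> (\<exists>x\<in>M. \<exists>r. \<forall>a\<in>A. d a x \<le> r)"

text \<open>BCP: the sum of characteristic functions is written out as the number of
  balls of the subfamily containing the point (required to be finite).\<close>
definition BCP :: "'a set \<Rightarrow> ('a \<Rightarrow> 'a \<Rightarrow> real) \<Rightarrow> bool" where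
  "BCP M d \<longleftrightarrow> (\<exists>N::nat. 1 \<le> N \<and>
     (\<forall>A \<B>. bounded_d M d A \<and> (\<forall>B\<in>\<B>. is_ball M B) \<and> (\<forall>a\<in>A. \<exists>B\<in>\<B>. fst B = a) \<longrightarrow>
        (\<exists>\<F>\<subseteq>\<B>. \<forall>p\<in>M.
            (p \<in> A \<longrightarrow> (\<exists>B\<in>\<F>. p \<in> cball_d M d B)) \<and>
            finite {B\<in>\<F>. p \<in> cball_d M d B} \<and>
            card {B\<in>\<F>. p \<in> cball_d M d B} \<le> N)))"

end

theory Submission
  imports Defs
begin

text \<open>Fix an accumulation point p and replace d by
  \<open>min (d x y) (c * (d x p + d y p))\<close>, the truncation of d by the scaled railway metric through
  the hub p; it lies between \<open>c * d\<close> and d. For this distance every ball centred at \<open>x \<noteq> p\<close> with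
  radius \<open>c * d x p\<close> contains p. Points tending to p fast enough, each closer to p than \<open>1 - c\<close>
  times the distance of the previous ones, lie outside each other's balls, so these balls form
  Besicovitch families of unbounded size.\<close>

context
  fixes M :: "'a set" and d :: "'a \<Rightarrow> 'a \<Rightarrow> real"
  assumes metric: "metric_on M d"
begin

lemma metric_on_nonneg: "x \<in> M \<Longrightarrow> y \<in> M \<Longrightarrow> 0 \<le> d x y"
  using metric unfolding metric_on_def by simp

lemma metric_on_eq_0_iff: "x \<in> M \<Longrightarrow> y \<in> M \<Longrightarrow> d x y = 0 \<longleftrightarrow> x = y"
  using metric unfolding metric_on_def by simp

lemma metric_on_pos: "x \<in> M \<Longrightarrow> y \<in> M \<Longrightarrow> x \<noteq> y \<Longrightarrow> 0 < d x y"
  using metric_on_nonneg[of x y] metric_on_eq_0_iff[of x y] by (simp add: less_le)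

lemma metric_on_sym: "x \<in> M \<Longrightarrow> y \<in> M \<Longrightarrow> d x y = d y x"
  using metric unfolding metric_on_def by simp

lemma metric_on_triangle: "x \<in> M \<Longrightarrow> y \<in> M \<Longrightarrow> z \<in> M \<Longrightarrow> d x z \<le> d x y + d y z"
  using metric unfolding metric_on_def by simp

end

lemma BCP_imp_wBCP:
  assumes "BCP M d"
  shows "wBCP M d"
proof -
  obtain N :: nat where "1 \<le> N" and N: "\<forall>A \<B>. bounded_d M d A \<and> (\<forall>B\<in>\<B>. is_ball M B) \<and>
      (\<forall>a\<in>A. \<exists>B\<in>\<B>. fst B = a) \<longrightarrow>
      (\<exists>\<F>\<subseteq>\<B>. \<forall>p\<in>M. (p \<in> A \<longrightarrow> (\<exists>B\<in>\<F>. p \<in> cball_d M d B)) \<and>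
         finite {B\<in>\<F>. p \<in> cball_d M d B} \<and> card {B\<in>\<F>. p \<in> cball_d M d B} \<le> N)"
    using assms unfolding BCP_def by (elim exE conjE) (rule that)
  have "card F \<le> N" if F: "besicovitch_family M d F" for F
  proof -
    have fin: "finite F" and balls: "\<forall>B\<in>F. is_ball M B"
      and sep: "\<forall>B\<in>F. \<forall>B'\<in>F. B \<noteq> B' \<longrightarrow> fst B \<notin> cball_d M d B'"
      using F unfolding besicovitch_family_def by simp_all
    obtain p where "p \<in> M" and p: "\<forall>B\<in>F. p \<in> cball_d M d B"
      using F unfolding besicovitch_family_def by (elim conjE bexE) (rule that)
    have centres: "fst ` F \<subseteq> M" using balls unfolding is_ball_def by auto
    have "bounded_d M d (fst ` F)"
      unfolding bounded_d_def
    proof (intro conjI centres bexI[OF _ \<open>p \<in> M\<close>] exI ballI)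
      fix a assume "a \<in> fst ` F"
      then show "d a p \<le> Max ((\<lambda>a. d a p) ` fst ` F)" using fin by (intro Max_ge) auto
    qed
    moreover have "\<forall>a\<in>fst ` F. \<exists>B\<in>F. fst B = a" by blast
    ultimately obtain \<F> where "\<F> \<subseteq> F" and \<F>: "\<forall>q\<in>M. (q \<in> fst ` F \<longrightarrow> (\<exists>B\<in>\<F>. q \<in> cball_d M d B)) \<and>
        finite {B\<in>\<F>. q \<in> cball_d M d B} \<and> card {B\<in>\<F>. q \<in> cball_d M d B} \<le> N"
      using N[rule_format, of "fst ` F" F] balls by blast
    text \<open>A centre of F lies in no other ball of F, so the cover \<open>\<F>\<close> must keep every ball.\<close>
    have "F \<subseteq> \<F>"
    proof
      fix B assume "B \<in> F"
      with \<F> centres obtain B' where "B' \<in> \<F>" "fst B \<in> cball_d M d B'" by blast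
      moreover from \<open>B' \<in> \<F>\<close> \<open>\<F> \<subseteq> F\<close> have "B' \<in> F" by blast
      ultimately have "B = B'" using sep[rule_format, OF \<open>B \<in> F\<close>] by blast
      with \<open>B' \<in> \<F>\<close> show "B \<in> \<F>" by simp
    qed
    with \<open>\<F> \<subseteq> F\<close> p have "{B\<in>\<F>. p \<in> cball_d M d B} = F" by blast
    moreover have "card {B\<in>\<F>. p \<in> cball_d M d B} \<le> N" using \<F> \<open>p \<in> M\<close> by blast
    ultimately show ?thesis by simp
  qed
  with \<open>1 \<le> N\<close> show ?thesis unfolding wBCP_def by blast
qed

definition hub_metric :: "('a \<Rightarrow> 'a \<Rightarrow> real) \<Rightarrow> 'a \<Rightarrow> real \<Rightarrow> 'a \<Rightarrow> 'a \<Rightarrow> real" where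
  "hub_metric d p c x y = (if x = y then 0 else min (d x y) (c * (d x p + d y p)))"

lemma hub_metric_distinct:
  "x \<noteq> y \<Longrightarrow> hub_metric d p c x y = min (d x y) (c * (d x p + d y p))"
  unfolding hub_metric_def by simp

context
  fixes M :: "'a set" and d :: "'a \<Rightarrow> 'a \<Rightarrow> real" and p :: 'a and c :: real
  assumes metric: "metric_on M d" and hub: "p \<in> M" and c_pos: "0 < c" and c_le_1: "c \<le> 1"
begin

lemma hub_metric_triangle:
  assumes "x \<in> M" "y \<in> M" "w \<in> M"
  shows "hub_metric d p c x w \<le> hub_metric d p c x y + hub_metric d p c y w"
proof (cases "x = y \<or> y = w \<or> x = w")
  case True
  have "0 \<le> hub_metric d p c x y" "0 \<le> hub_metric d p c y w"
    unfolding hub_metric_def using assms hub c_pos metric_on_nonneg[OF metric] by auto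
  with True show ?thesis unfolding hub_metric_def by auto
next
  case False
  note nonneg = metric_on_nonneg[OF metric] and tri = metric_on_triangle[OF metric]
  have le_d: "hub_metric d p c x w \<le> d x w"
    and le_rail: "hub_metric d p c x w \<le> c * (d x p + d w p)"
    using False by (simp_all add: hub_metric_distinct)
  have "d x w \<le> d x y + d y w" using tri assms by blast
  moreover have "c * d x p \<le> c * d x y + c * d y p"
    using mult_left_mono[OF tri[of x y p], of c] assms hub c_pos by (simp add: algebra_simps)
  moreover have "c * d w p \<le> c * d y w + c * d y p"
    using mult_left_mono[OF tri[of w y p], of c] assms hub c_pos metric_on_sym[OF metric, of w y]
    by (simp add: algebra_simps)
  moreover have "c * d x y \<le> d x y" "c * d y w \<le> d y w" "0 \<le> c * d y p"
    using c_pos c_le_1 nonneg assms hub by (simp_all add: mult_left_le_one_le)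
  ultimately have "hub_metric d p c x w \<le> d x y + d y w"
    "hub_metric d p c x w \<le> d x y + c * (d y p + d w p)"
    "hub_metric d p c x w \<le> c * (d x p + d y p) + d y w"
    "hub_metric d p c x w \<le> c * (d x p + d y p) + c * (d y p + d w p)"
    using le_d le_rail unfolding distrib_left by linarith+
  then show ?thesis
    using False by (simp add: hub_metric_distinct min_add_distrib_left min_add_distrib_right)
qed

lemma metric_on_hub_metric: "metric_on M (hub_metric d p c)"
  unfolding metric_on_def
proof (intro conjI ballI)
  fix x y assume xy: "x \<in> M" "y \<in> M"
  show "0 \<le> hub_metric d p c x y"
    unfolding hub_metric_def using xy hub c_pos metric_on_nonneg[OF metric] by auto
  show "hub_metric d p c x y = hub_metric d p c y x"
    unfolding hub_metric_def using xy metric_on_sym[OF metric] by (auto simp: add.commute)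
  show "hub_metric d p c x y = 0 \<longleftrightarrow> x = y"
  proof
    assume zero: "hub_metric d p c x y = 0"
    show "x = y"
    proof (rule ccontr)
      assume ne: "x \<noteq> y"
      then have "0 < d x p \<or> 0 < d y p" using xy hub metric_on_pos[OF metric] by blast
      moreover have "0 \<le> d x p" "0 \<le> d y p" using xy hub metric_on_nonneg[OF metric] by auto
      ultimately have "0 < d x p + d y p" by linarith
      then have "0 < min (d x y) (c * (d x p + d y p))"
        using c_pos metric_on_pos[OF metric xy ne] by simp
      with zero ne show False unfolding hub_metric_def by simp
    qed
  qed (simp add: hub_metric_def)
qed (rule hub_metric_triangle)

lemma hub_metric_bounds:
  assumes "x \<in> M" "y \<in> M"
  shows "c * d x y \<le> hub_metric d p c x y \<and> hub_metric d p c x y \<le> d x y"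
proof (cases "x = y")
  case True
  then show ?thesis using assms metric_on_eq_0_iff[OF metric, of y y] unfolding hub_metric_def by simp
next
  case False
  have "c * d x y \<le> c * (d x p + d y p)"
    using mult_left_mono[OF metric_on_triangle[OF metric, of x p y]] assms hub c_pos
      metric_on_sym[OF metric, of y p] by simp
  moreover have "c * d x y \<le> d x y"
    using c_pos c_le_1 metric_on_nonneg[OF metric] assms by (simp add: mult_left_le_one_le)
  ultimately show ?thesis using False unfolding hub_metric_def by simp
qed

lemma hub_metric_from_hub:
  assumes "x \<in> M" "x \<noteq> p"
  shows "hub_metric d p c p x = c * d x p"
proof -
  have "c * d x p \<le> d x p"
    using c_pos c_le_1 metric_on_nonneg[OF metric assms(1) hub] by (simp add: mult_left_le_one_le)
  then show ?thesis
    using assms hub metric_on_eq_0_iff[OF metric hub hub] metric_on_sym[OF metric, of x p]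
    unfolding hub_metric_def by auto
qed

end

text \<open>For \<open>x \<noteq> p\<close> this puts x outside the \<open>hub_metric\<close>-ball of radius \<open>c * d y p\<close> around y.\<close>
definition hub_separated :: "('a \<Rightarrow> 'a \<Rightarrow> real) \<Rightarrow> 'a \<Rightarrow> real \<Rightarrow> 'a set \<Rightarrow> bool" where
  "hub_separated d p c S \<longleftrightarrow> (\<forall>x\<in>S. \<forall>y\<in>S. x \<noteq> y \<longrightarrow> c * d y p < d x y)"

context
  fixes M :: "'a set" and d :: "'a \<Rightarrow> 'a \<Rightarrow> real" and p :: 'a and c :: real
  assumes metric: "metric_on M d" and acc: "accumulation_point M d p"
    and c_nonneg: "0 \<le> c" and c_less_1: "c < 1"
begin

lemma hub_separated_insert_near_hub:
  assumes S: "finite S" "S \<subseteq> M - {p}" "hub_separated d p c S"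
  obtains q where "q \<in> M - S - {p}" "hub_separated d p c (insert q S)"
proof -
  have hub: "p \<in> M" using acc unfolding accumulation_point_def by blast
  define m where "m = (if S = {} then 1 else Min ((\<lambda>x. d x p) ` S))"
  have "0 < m"
    using S hub metric_on_pos[OF metric] unfolding m_def by (auto simp: Min_gr_iff)
  have m_le: "m \<le> d x p" if "x \<in> S" for x
    unfolding m_def using S(1) that by auto
  from \<open>0 < m\<close> c_less_1 have "0 < (1 - c) * m" by simp
  then obtain q where q: "q \<in> M" "q \<noteq> p" "d q p < (1 - c) * m"
    using acc unfolding accumulation_point_def by blast
  have q_close: "d q p < (1 - c) * d x p" if "x \<in> S" for x
    using q(3) mult_left_mono[OF m_le[OF that], of "1 - c"] c_less_1 by linarith
  have "q \<notin> S"
  proof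
    assume "q \<in> S"
    have "0 \<le> c * m" using c_nonneg \<open>0 < m\<close> by simp
    then show False
      using q(3) m_le[OF \<open>q \<in> S\<close>] by (simp add: algebra_simps)
  qed
  have far: "c * d x p < d x q \<and> c * d q p < d x q" if x: "x \<in> S" for x
  proof -
    have "x \<in> M" using x S by auto
    have "0 \<le> c * d x p" using c_nonneg metric_on_nonneg[OF metric \<open>x \<in> M\<close> hub] by simp
    have tri: "d x p \<le> d x q + d q p" using metric_on_triangle[OF metric \<open>x \<in> M\<close> q(1) hub] .
    have q_close': "d q p < d x p - c * d x p" using q_close[OF x] by (simp add: algebra_simps)
    then have "c * d q p \<le> c * d x p"
      using \<open>0 \<le> c * d x p\<close> c_nonneg by (intro mult_left_mono) simp_all
    with tri q_close' show ?thesis by linarith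
  qed
  have "hub_separated d p c (insert q S)"
    unfolding hub_separated_def
  proof (intro ballI impI)
    fix x y assume x: "x \<in> insert q S" and y: "y \<in> insert q S" and "x \<noteq> y"
    then consider "x = q" "y \<in> S" | "x \<in> S" "y = q" | "x \<in> S" "y \<in> S" by blast
    then show "c * d y p < d x y"
    proof cases
      case 1
      then show ?thesis
        using far[of y] S(2) q(1) metric_on_sym[OF metric, of y q] by auto
    next
      case 2
      then show ?thesis using far by blast
    next
      case 3
      then show ?thesis using S(3) \<open>x \<noteq> y\<close> unfolding hub_separated_def by blast
    qed
  qed
  with q \<open>q \<notin> S\<close> show thesis using that by blast
qed

lemma hub_separated_sets_exist:
  "\<exists>S. finite S \<and> card S = n \<and> S \<subseteq> M - {p} \<and> hub_separated d p c S"
proof (induction n)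
  case 0
  show ?case by (intro exI[of _ "{}"]) (simp add: hub_separated_def)
next
  case (Suc n)
  then obtain S where S: "finite S" "card S = n" "S \<subseteq> M - {p}" "hub_separated d p c S"
    by blast
  obtain q where "q \<in> M - S - {p}" "hub_separated d p c (insert q S)"
    using S(1,3,4) by (rule hub_separated_insert_near_hub)
  with S show ?case by (intro exI[of _ "insert q S"]) auto
qed

end

lemma hub_separated_besicovitch_family:
  assumes metric: "metric_on M d" and hub: "p \<in> M" and c: "0 < c" "c \<le> 1"
    and S: "finite S" "S \<subseteq> M - {p}" "hub_separated d p c S"
  shows "besicovitch_family M (hub_metric d p c) ((\<lambda>x. (x, c * d x p)) ` S)"
  unfolding besicovitch_family_def
proof (intro conjI ballI impI bexI[OF _ hub])
  show "finite ((\<lambda>x. (x, c * d x p)) ` S)" using S by simp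
next
  fix B assume "B \<in> (\<lambda>x. (x, c * d x p)) ` S"
  then obtain x where x: "x \<in> S" "B = (x, c * d x p)" by blast
  have "0 < d x p" using x S hub metric_on_pos[OF metric] by auto
  then show "is_ball M B" unfolding is_ball_def using x S c by auto
  have "x \<in> M" "x \<noteq> p" using x S by auto
  then show "p \<in> cball_d M (hub_metric d p c) B"
    unfolding cball_d_def using x hub hub_metric_from_hub[OF metric hub c] by simp
next
  fix B B' assume B: "B \<in> (\<lambda>x. (x, c * d x p)) ` S" and B': "B' \<in> (\<lambda>x. (x, c * d x p)) ` S"
    and "B \<noteq> B'"
  obtain x y where xy: "x \<in> S" "y \<in> S" "B = (x, c * d x p)" "B' = (y, c * d y p)"
    using B B' by blast
  with \<open>B \<noteq> B'\<close> have "x \<noteq> y" by auto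
  have "0 < d x p" using xy S hub metric_on_pos[OF metric] by auto
  then have "c * d y p < c * (d x p + d y p)" using c by simp
  moreover have "c * d y p < d x y"
    using S(3) xy \<open>x \<noteq> y\<close> unfolding hub_separated_def by blast
  ultimately have "c * d y p < hub_metric d p c x y"
    using \<open>x \<noteq> y\<close> unfolding hub_metric_def by simp
  then show "fst B \<notin> cball_d M (hub_metric d p c) B'"
    unfolding cball_d_def using xy by simp
qed

lemma not_wBCP_hub_metric:
  assumes metric: "metric_on M d" and acc: "accumulation_point M d p" and c: "0 < c" "c < 1"
  shows "\<not> wBCP M (hub_metric d p c)"
proof
  assume "wBCP M (hub_metric d p c)"
  then obtain N where N: "\<And>F. besicovitch_family M (hub_metric d p c) F \<Longrightarrow> card F \<le> N"
    unfolding wBCP_def by blast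
  have hub: "p \<in> M" using acc unfolding accumulation_point_def by blast
  obtain S where S: "finite S" "card S = Suc N" "S \<subseteq> M - {p}" "hub_separated d p c S"
    using hub_separated_sets_exist[OF metric acc _ c(2)] c(1) by auto
  have "card ((\<lambda>x. (x, c * d x p)) ` S) = Suc N"
    using S by (simp add: card_image inj_on_def)
  moreover have "besicovitch_family M (hub_metric d p c) ((\<lambda>x. (x, c * d x p)) ` S)"
    using hub_separated_besicovitch_family[OF metric hub c(1) _ S(1,3,4)] c(2) by simp
  then have "card ((\<lambda>x. (x, c * d x p)) ` S) \<le> N" by (rule N)
  ultimately show False by simp
qed

theorem theorem1p3:
  fixes M :: "'a set" and d :: "'a \<Rightarrow> 'a \<Rightarrow> real" and c :: real
  assumes "metric_on M d"
    and "\<exists>p. accumulation_point M d p"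
    and "0 < c" and "c < 1"
  shows "\<exists>d'. metric_on M d' \<and>
           (\<forall>x\<in>M. \<forall>y\<in>M. c * d x y \<le> d' x y \<and> d' x y \<le> d x y) \<and>
           \<not> wBCP M d' \<and> \<not> BCP M d'"
proof -
  obtain p where acc: "accumulation_point M d p" using assms(2) by blast
  then have hub: "p \<in> M" unfolding accumulation_point_def by blast
  have "\<not> wBCP M (hub_metric d p c)"
    using not_wBCP_hub_metric[OF assms(1) acc assms(3,4)] .
  moreover have "metric_on M (hub_metric d p c)"
    using metric_on_hub_metric[OF assms(1) hub] assms(3,4) by simp
  moreover have "\<forall>x\<in>M. \<forall>y\<in>M. c * d x y \<le> hub_metric d p c x y \<and> hub_metric d p c x y \<le> d x y"
    using hub_metric_bounds[OF assms(1) hub] assms(3,4) by simp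
  ultimately show ?thesis using BCP_imp_wBCP by blast
qed

end
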